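(* Let $I_1,\dots,I_s$ be squarefree monomial ideals in $S=\mathbb{K}[x_1,\dots,x_n]$, $\mathbb{K}$ a field. Then (a) $\operatorname{sreg}(S/\sum_{i=1}^s I_i)\le\sum_{i=1}^s\operatorname{sreg}(S/I_i)$, and (b) $\operatorname{sreg}(\bigcap_{i=1}^s I_i)\le\sum_{i=1}^s\operatorname{sreg}(I_i)$.
   Context: Stanley regularity: for a finitely generated squarefree $\mathbb{Z}^n$-graded $S$-module $M$ (such as $S/I$ or $I$ for a squarefree monomial ideal $I$), a squarefree Stanley decomposition of $M$ is a decomposition $M=\bigoplus_{i=1}^r u_i\mathbb{K}[Z_i]$ as $\mathbb{K}$-vector spaces, where $Z_i\subseteq\{x_1,\dots,x_n\}$, each $u_i$ is a homogeneous element of squarefree degree with support contained in $Z_i$, and each $u_i\mathbb{K}[Z_i]$ (the $\mathbb{K}$-span of $u_iv$, $v$ a monomial of $\mathbb{K}[Z_i]$) is free over $\mathbb{K}[Z_i]$. Its Stanley regularity is $\max_i\deg(u_i)$, and $\operatorname{sreg}(M)$ is the minimum of this over all such decompositions. *)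

theory Defs
  imports Main
begin

text \<open>Monomials of S = K[x_0,...,x_(n-1)] are represented by exponent vectors.
A monomial ideal is represented by the set of monomials it contains (it is
the K-span of these); a Z^n-graded module M in {S/I, I} is represented by its
monomial K-basis (the standard monomials for S/I, the monomials of I for I).\<close>

type_synonym mono = "nat \<Rightarrow> nat"

definition smonos :: "nat \<Rightarrow> mono set" where
  "smonos n = {a. \<forall>i. n \<le> i \<longrightarrow> a i = 0}"

definition sqfree :: "mono \<Rightarrow> bool" where
  "sqfree a \<longleftrightarrow> (\<forall>i. a i \<le> 1)"

definition mdeg :: "nat \<Rightarrow> mono \<Rightarrow> nat" where
  "mdeg n a = (\<Sum>i<n. a i)"

definition sqfree_monomial_ideal :: "nat \<Rightarrow> mono set \<Rightarrow> bool" where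
  "sqfree_monomial_ideal n I \<longleftrightarrow>
     I \<subseteq> smonos n \<and>
     (\<forall>a\<in>I. \<forall>b\<in>smonos n. (\<lambda>i. a i + b i) \<in> I) \<and>
     (\<forall>a\<in>I. \<exists>g\<in>I. sqfree g \<and> (\<forall>i. g i \<le> a i))"

definition cone :: "mono \<Rightarrow> nat set \<Rightarrow> mono set" where
  "cone u Z = {(\<lambda>i. u i + v i) | v. \<forall>i. i \<notin> Z \<longrightarrow> v i = 0}"

text \<open>Squarefree Stanley decomposition of the module with monomial basis B:
summands u K[Z] with u a squarefree monomial, supp u \<subseteq> Z, u K[Z] free
(i.e. all u v, v in K[Z], are nonzero in M, i.e. lie in B), and M the direct sum.\<close>
definition stanley_decomp :: "nat \<Rightarrow> mono set \<Rightarrow> (mono \<times> nat set) set \<Rightarrow> bool" where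
  "stanley_decomp n B D \<longleftrightarrow>
     finite D \<and>
     (\<forall>(u, Z)\<in>D. u \<in> smonos n \<and> sqfree u \<and> Z \<subseteq> {..<n} \<and>
                  {i. u i \<noteq> 0} \<subseteq> Z \<and> cone u Z \<subseteq> B) \<and>
     (\<forall>p\<in>D. \<forall>q\<in>D. p \<noteq> q \<longrightarrow> cone (fst p) (snd p) \<inter> cone (fst q) (snd q) = {}) \<and>
     (\<Union>(u, Z)\<in>D. cone u Z) = B"

definition sreg :: "nat \<Rightarrow> mono set \<Rightarrow> nat" where
  "sreg n B = Inf {d. \<exists>D. stanley_decomp n B D \<and> (\<forall>(u, Z)\<in>D. mdeg n u \<le> d)}"

end

theory Submission
  imports Defs
begin

text \<open>Two Stanley spaces meet in a Stanley space: u K[Z] \<inter> v K[W] is empty or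
lcm(u, v) K[Z \<inter> W], and deg lcm(u, v) \<le> deg u + deg v. Hence the nonempty pairwise
intersections of the summands of Stanley decompositions of B and C decompose B \<inter> C,
and sreg is subadditive under intersection of monomial bases. Both inequalities follow,
as the standard monomials of S/\<Sum>I_i are those standard for every S/I_i. Each sreg is
attained because membership in a squarefree monomial ideal depends only on the support
of a monomial, so the spaces x_F K[F] decompose both S/I and I.\<close>

lemma mem_cone_iff:
  assumes "{i. u i \<noteq> 0} \<subseteq> Z"
  shows "m \<in> cone u Z \<longleftrightarrow> (\<forall>i. u i \<le> m i) \<and> (\<forall>i. i \<notin> Z \<longrightarrow> m i = 0)"
proof
  assume "m \<in> cone u Z"
  then obtain v where "m = (\<lambda>i. u i + v i)" and "\<forall>i. i \<notin> Z \<longrightarrow> v i = 0"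
    unfolding cone_def by blast
  then show "(\<forall>i. u i \<le> m i) \<and> (\<forall>i. i \<notin> Z \<longrightarrow> m i = 0)"
    using assms by auto
next
  assume "(\<forall>i. u i \<le> m i) \<and> (\<forall>i. i \<notin> Z \<longrightarrow> m i = 0)"
  then show "m \<in> cone u Z"
    unfolding cone_def by (intro CollectI exI[of _ "\<lambda>i. m i - u i"]) auto
qed

lemma cone_Int:
  assumes "{i. u i \<noteq> 0} \<subseteq> Z" and "{i. v i \<noteq> 0} \<subseteq> W"
  shows "cone u Z \<inter> cone v W =
    (if {i. u i \<noteq> 0 \<or> v i \<noteq> 0} \<subseteq> Z \<inter> W then cone (\<lambda>i. max (u i) (v i)) (Z \<inter> W) else {})"
proof (cases "{i. u i \<noteq> 0 \<or> v i \<noteq> 0} \<subseteq> Z \<inter> W")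
  case True
  then have "{i. max (u i) (v i) \<noteq> 0} \<subseteq> Z \<inter> W"
    by auto
  then show ?thesis
    using True mem_cone_iff[OF assms(1)] mem_cone_iff[OF assms(2)]
      mem_cone_iff[of "\<lambda>i. max (u i) (v i)" "Z \<inter> W"] by auto
next
  case False
  then obtain i where "u i \<noteq> 0 \<or> v i \<noteq> 0" and "i \<notin> Z \<or> i \<notin> W"
    by auto
  have "m \<notin> cone u Z \<inter> cone v W" for m
  proof
    assume "m \<in> cone u Z \<inter> cone v W"
    then have "u i \<le> m i" "v i \<le> m i" "i \<notin> Z \<or> i \<notin> W \<Longrightarrow> m i = 0"
      using mem_cone_iff[OF assms(1)] mem_cone_iff[OF assms(2)] by auto
    then show False
      using \<open>u i \<noteq> 0 \<or> v i \<noteq> 0\<close> \<open>i \<notin> Z \<or> i \<notin> W\<close> by auto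
  qed
  then show ?thesis
    using False by auto
qed

lemma stanley_decomp_summandD:
  assumes "stanley_decomp n B D" and "(u, Z) \<in> D"
  shows "u \<in> smonos n" "sqfree u" "Z \<subseteq> {..<n}" "{i. u i \<noteq> 0} \<subseteq> Z" "cone u Z \<subseteq> B"
  using assms unfolding stanley_decomp_def by blast+

lemma stanley_decomp_disjoint:
  assumes "stanley_decomp n B D" and "(u, Z) \<in> D" "(v, W) \<in> D" "(u, Z) \<noteq> (v, W)"
  shows "cone u Z \<inter> cone v W = {}"
proof -
  have "\<forall>p\<in>D. \<forall>q\<in>D. p \<noteq> q \<longrightarrow> cone (fst p) (snd p) \<inter> cone (fst q) (snd q) = {}"
    using assms(1) unfolding stanley_decomp_def by blast
  from this[rule_format, OF assms(2-4)] show ?thesis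
    by simp
qed

lemma stanley_decomp_covers:
  assumes "stanley_decomp n B D" and "m \<in> B"
  obtains u Z where "(u, Z) \<in> D" and "m \<in> cone u Z"
proof -
  have "(\<Union>(u, Z)\<in>D. cone u Z) = B"
    using assms(1) unfolding stanley_decomp_def by blast
  then show ?thesis
    using assms(2) that by blast
qed

definition stanley_meet ::
    "(mono \<times> nat set) set \<Rightarrow> (mono \<times> nat set) set \<Rightarrow> (mono \<times> nat set) set" where
  "stanley_meet D E =
    {((\<lambda>i. max (u i) (v i)), Z \<inter> W) | u Z v W.
       (u, Z) \<in> D \<and> (v, W) \<in> E \<and> {i. u i \<noteq> 0 \<or> v i \<noteq> 0} \<subseteq> Z \<inter> W}"

lemma finite_stanley_meet:
  assumes "finite D" and "finite E"
  shows "finite (stanley_meet D E)"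
proof -
  have "stanley_meet D E \<subseteq>
      (\<lambda>((u, Z), (v, W)). ((\<lambda>i. max (u i) (v i)), Z \<inter> W)) ` (D \<times> E)"
  proof
    fix x
    assume "x \<in> stanley_meet D E"
    then obtain u Z v W where "x = ((\<lambda>i. max (u i) (v i)), Z \<inter> W)" "(u, Z) \<in> D" "(v, W) \<in> E"
      unfolding stanley_meet_def by blast
    then show "x \<in> (\<lambda>((u, Z), (v, W)). ((\<lambda>i. max (u i) (v i)), Z \<inter> W)) ` (D \<times> E)"
      by (intro image_eqI[where x = "((u, Z), (v, W))"]) auto
  qed
  then show ?thesis
    using assms by (meson finite_SigmaI finite_imageI finite_subset)
qed

lemma stanley_meet_covers:
  assumes D: "stanley_decomp n B D" and E: "stanley_decomp n C E"
  shows "B \<inter> C \<subseteq> (\<Union>(u, Z)\<in>stanley_meet D E. cone u Z)"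
proof
  fix m
  assume "m \<in> B \<inter> C"
  then obtain u Z v W where uv: "(u, Z) \<in> D" "(v, W) \<in> E" and m: "m \<in> cone u Z \<inter> cone v W"
    using stanley_decomp_covers[OF D] stanley_decomp_covers[OF E] by (metis IntD1 IntD2 IntI)
  have cone_Int_uv: "cone u Z \<inter> cone v W =
      (if {i. u i \<noteq> 0 \<or> v i \<noteq> 0} \<subseteq> Z \<inter> W then cone (\<lambda>i. max (u i) (v i)) (Z \<inter> W) else {})"
    using cone_Int stanley_decomp_summandD(4)[OF D uv(1)] stanley_decomp_summandD(4)[OF E uv(2)]
    by blast
  then have supp: "{i. u i \<noteq> 0 \<or> v i \<noteq> 0} \<subseteq> Z \<inter> W"
    using m by (auto split: if_splits)
  then have "((\<lambda>i. max (u i) (v i)), Z \<inter> W) \<in> stanley_meet D E"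
    using uv unfolding stanley_meet_def by blast
  moreover have "m \<in> cone (\<lambda>i. max (u i) (v i)) (Z \<inter> W)"
    using cone_Int_uv supp m by simp
  ultimately show "m \<in> (\<Union>(u, Z)\<in>stanley_meet D E. cone u Z)"
    by blast
qed

lemma stanley_decomp_meet:
  assumes D: "stanley_decomp n B D" and E: "stanley_decomp n C E"
  shows "stanley_decomp n (B \<inter> C) (stanley_meet D E)"
proof -
  note summand_D = stanley_decomp_summandD[OF D] and summand_E = stanley_decomp_summandD[OF E]
  have cone_meet: "cone (\<lambda>i. max (u i) (v i)) (Z \<inter> W) = cone u Z \<inter> cone v W"
    if "(u, Z) \<in> D" "(v, W) \<in> E" "{i. u i \<noteq> 0 \<or> v i \<noteq> 0} \<subseteq> Z \<inter> W" for u Z v W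
    using cone_Int[OF summand_D(4) summand_E(4), OF that(1,2)] that(3) by simp
  have "finite (stanley_meet D E)"
    using D E unfolding stanley_decomp_def by (simp add: finite_stanley_meet)
  moreover have "u \<in> smonos n \<and> sqfree u \<and> Z \<subseteq> {..<n} \<and> {i. u i \<noteq> 0} \<subseteq> Z \<and>
      cone u Z \<subseteq> B \<inter> C" if uZ: "(u, Z) \<in> stanley_meet D E" for u Z
  proof -
    obtain u1 Z1 u2 Z2 where u: "u = (\<lambda>i. max (u1 i) (u2 i))" and Z: "Z = Z1 \<inter> Z2"
      and u12: "(u1, Z1) \<in> D" "(u2, Z2) \<in> E" "{i. u1 i \<noteq> 0 \<or> u2 i \<noteq> 0} \<subseteq> Z1 \<inter> Z2"
      using uZ unfolding stanley_meet_def by blast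
    show ?thesis
      using cone_meet[OF u12] u12(3) summand_D[OF u12(1)] summand_E[OF u12(2)]
      unfolding u Z smonos_def sqfree_def by auto
  qed
  moreover have "cone (fst p) (snd p) \<inter> cone (fst q) (snd q) = {}"
    if p_mem: "p \<in> stanley_meet D E" and q_mem: "q \<in> stanley_meet D E" and "p \<noteq> q"
    for p q
  proof -
    obtain u Z v W where p: "p = ((\<lambda>i. max (u i) (v i)), Z \<inter> W)"
      and uv: "(u, Z) \<in> D" "(v, W) \<in> E" "{i. u i \<noteq> 0 \<or> v i \<noteq> 0} \<subseteq> Z \<inter> W"
      using p_mem unfolding stanley_meet_def by blast
    obtain u' Z' v' W' where q: "q = ((\<lambda>i. max (u' i) (v' i)), Z' \<inter> W')"
      and uv': "(u', Z') \<in> D" "(v', W') \<in> E" "{i. u' i \<noteq> 0 \<or> v' i \<noteq> 0} \<subseteq> Z' \<inter> W'"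
      using q_mem unfolding stanley_meet_def by blast
    have "(u, Z) \<noteq> (u', Z') \<or> (v, W) \<noteq> (v', W')"
      using \<open>p \<noteq> q\<close> p q by auto
    then have "cone u Z \<inter> cone u' Z' = {} \<or> cone v W \<inter> cone v' W' = {}"
      using stanley_decomp_disjoint[OF D uv(1) uv'(1)] stanley_decomp_disjoint[OF E uv(2) uv'(2)]
      by blast
    then show ?thesis
      unfolding p q using cone_meet[OF uv] cone_meet[OF uv'] by auto
  qed
  moreover have "B \<inter> C \<subseteq> (\<Union>(u, Z)\<in>stanley_meet D E. cone u Z)"
    by (rule stanley_meet_covers[OF D E])
  ultimately show ?thesis
    unfolding stanley_decomp_def by blast
qed

definition stanley_decomp_le :: "nat \<Rightarrow> mono set \<Rightarrow> nat \<Rightarrow> bool" where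
  "stanley_decomp_le n B d \<longleftrightarrow> (\<exists>D. stanley_decomp n B D \<and> (\<forall>(u, Z)\<in>D. mdeg n u \<le> d))"

lemma sreg_le:
  assumes "stanley_decomp_le n B d"
  shows "sreg n B \<le> d"
  using assms unfolding sreg_def stanley_decomp_le_def by (simp add: wellorder_Inf_le1)

lemma stanley_decomp_le_sreg:
  assumes "stanley_decomp_le n B d"
  shows "stanley_decomp_le n B (sreg n B)"
proof -
  have "Inf {d. stanley_decomp_le n B d} \<in> {d. stanley_decomp_le n B d}"
    using assms by (intro Inf_nat_def1) auto
  then show ?thesis
    unfolding sreg_def stanley_decomp_le_def by simp
qed

lemma mdeg_max: "mdeg n (\<lambda>i. max (a i) (b i)) \<le> mdeg n a + mdeg n b"
  unfolding mdeg_def by (simp add: sum.distrib[symmetric] sum_mono)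

lemma stanley_decomp_le_Int:
  assumes "stanley_decomp_le n B d" and "stanley_decomp_le n C e"
  shows "stanley_decomp_le n (B \<inter> C) (d + e)"
proof -
  obtain D E where D: "stanley_decomp n B D" "\<forall>(u, Z)\<in>D. mdeg n u \<le> d"
    and E: "stanley_decomp n C E" "\<forall>(v, W)\<in>E. mdeg n v \<le> e"
    using assms unfolding stanley_decomp_le_def by blast
  have "mdeg n u \<le> d + e" if uZ: "(u, Z) \<in> stanley_meet D E" for u Z
  proof -
    obtain u1 Z1 u2 Z2 where u: "u = (\<lambda>i. max (u1 i) (u2 i))" and "(u1, Z1) \<in> D" "(u2, Z2) \<in> E"
      using uZ unfolding stanley_meet_def by blast
    then have "mdeg n u1 \<le> d" "mdeg n u2 \<le> e"
      using D(2) E(2) by auto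
    then show ?thesis
      using mdeg_max[of n u1 u2] unfolding u by linarith
  qed
  then show ?thesis
    using stanley_decomp_meet[OF D(1) E(1)] unfolding stanley_decomp_le_def by blast
qed

lemma stanley_decomp_le_smonos: "stanley_decomp_le n (smonos n) 0"
proof -
  have "cone (\<lambda>_. 0) {..<n} = smonos n"
    using mem_cone_iff[of "\<lambda>_. 0" "{..<n}"] unfolding smonos_def by auto
  then have "stanley_decomp n (smonos n) {((\<lambda>_. 0), {..<n})}"
    unfolding stanley_decomp_def by (simp add: smonos_def sqfree_def)
  then show ?thesis
    unfolding stanley_decomp_le_def by (auto simp: mdeg_def)
qed

lemma stanley_decomp_le_INT:
  fixes s :: nat
  assumes "\<forall>i<s. stanley_decomp_le n (B i) (d i)"
  shows "stanley_decomp_le n (smonos n \<inter> (\<Inter>i<s. B i)) (\<Sum>i<s. d i)"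
  using assms
proof (induction s)
  case 0
  then show ?case
    using stanley_decomp_le_smonos by simp
next
  case (Suc s)
  then have "stanley_decomp_le n ((smonos n \<inter> (\<Inter>i<s. B i)) \<inter> B s) ((\<Sum>i<s. d i) + d s)"
    by (intro stanley_decomp_le_Int) auto
  moreover have "(smonos n \<inter> (\<Inter>i<s. B i)) \<inter> B s = smonos n \<inter> (\<Inter>i<Suc s. B i)"
    by (auto simp: lessThan_Suc)
  ultimately show ?case
    by simp
qed

lemma sreg_INT_le_sum:
  fixes s :: nat
  assumes "\<forall>i<s. \<exists>d. stanley_decomp_le n (B i) d"
  shows "sreg n (smonos n \<inter> (\<Inter>i<s. B i)) \<le> (\<Sum>i<s. sreg n (B i))"
proof (rule sreg_le, rule stanley_decomp_le_INT)
  show "\<forall>i<s. stanley_decomp_le n (B i) (sreg n (B i))"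
    using assms stanley_decomp_le_sreg by blast
qed

definition sqfree_mono :: "nat set \<Rightarrow> mono" where
  "sqfree_mono F = (\<lambda>i. if i \<in> F then 1 else 0)"

lemma smonos_iff_support: "m \<in> smonos n \<longleftrightarrow> {i. m i \<noteq> 0} \<subseteq> {..<n}"
  unfolding smonos_def by (auto simp: subset_eq) (metis less_nat_zero_code not_less)

lemma sqfree_mono_support_in_smonos:
  "m \<in> smonos n \<Longrightarrow> sqfree_mono {i. m i \<noteq> 0} \<in> smonos n"
  unfolding smonos_iff_support sqfree_mono_def by auto

lemma cone_sqfree_mono: "cone (sqfree_mono F) F = {m. {i. m i \<noteq> 0} = F}"
proof (intro set_eqI)
  fix m
  have "{i. sqfree_mono F i \<noteq> 0} \<subseteq> F"
    unfolding sqfree_mono_def by auto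
  then have "m \<in> cone (sqfree_mono F) F \<longleftrightarrow>
      (\<forall>i. sqfree_mono F i \<le> m i \<and> (i \<notin> F \<longrightarrow> m i = 0))"
    by (simp add: mem_cone_iff all_conj_distrib)
  also have "\<dots> \<longleftrightarrow> (\<forall>i. i \<in> F \<longleftrightarrow> m i \<noteq> 0)"
    unfolding sqfree_mono_def by (intro iff_allI) auto
  also have "\<dots> \<longleftrightarrow> m \<in> {m. {i. m i \<noteq> 0} = F}"
    by auto
  finally show "m \<in> cone (sqfree_mono F) F \<longleftrightarrow> m \<in> {m. {i. m i \<noteq> 0} = F}" .
qed

lemma sqfree_monomial_ideal_upward_closed:
  assumes I: "sqfree_monomial_ideal n I" and "a \<in> I" "b \<in> smonos n" "\<forall>i. a i \<le> b i"
  shows "b \<in> I"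
proof -
  have closed: "\<forall>a\<in>I. \<forall>c\<in>smonos n. (\<lambda>i. a i + c i) \<in> I"
    using I unfolding sqfree_monomial_ideal_def by (elim conjE)
  have "(\<lambda>i. b i - a i) \<in> smonos n"
    using assms(3) unfolding smonos_def by auto
  from closed[rule_format, OF assms(2) this] have "(\<lambda>i. a i + (b i - a i)) \<in> I" .
  moreover have "(\<lambda>i. a i + (b i - a i)) = b"
    using assms(4) by (simp add: fun_eq_iff)
  ultimately show ?thesis
    by simp
qed

lemma sqfree_monomial_ideal_mem_iff_support:
  assumes I: "sqfree_monomial_ideal n I" and m: "m \<in> smonos n"
  shows "m \<in> I \<longleftrightarrow> sqfree_mono {i. m i \<noteq> 0} \<in> I"
proof
  assume "m \<in> I"
  then obtain g where "g \<in> I" and "sqfree g" and g_le: "\<forall>i. g i \<le> m i"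
    using I unfolding sqfree_monomial_ideal_def by blast
  have "g i \<le> sqfree_mono {i. m i \<noteq> 0} i" for i
  proof (cases "m i = 0")
    case True
    then show ?thesis
      using g_le[rule_format, of i] by simp
  next
    case False
    then show ?thesis
      using \<open>sqfree g\<close> unfolding sqfree_def sqfree_mono_def by simp
  qed
  then show "sqfree_mono {i. m i \<noteq> 0} \<in> I"
    using sqfree_monomial_ideal_upward_closed[OF I \<open>g \<in> I\<close> sqfree_mono_support_in_smonos[OF m]] by blast
next
  assume "sqfree_mono {i. m i \<noteq> 0} \<in> I"
  moreover have "\<forall>i. sqfree_mono {i. m i \<noteq> 0} i \<le> m i"
    unfolding sqfree_mono_def by auto
  ultimately show "m \<in> I"
    using sqfree_monomial_ideal_upward_closed[OF I _ m] by blast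
qed

lemma stanley_decomp_le_support_closed:
  assumes B: "B \<subseteq> smonos n"
    and closed: "\<And>m. m \<in> smonos n \<Longrightarrow> m \<in> B \<longleftrightarrow> sqfree_mono {i. m i \<noteq> 0} \<in> B"
  shows "stanley_decomp_le n B n"
proof -
  define Fs where "Fs = {F. F \<subseteq> {..<n} \<and> sqfree_mono F \<in> B}"
  define D where "D = (\<lambda>F. (sqfree_mono F, F)) ` Fs"
  have "finite D"
    unfolding D_def Fs_def by (simp add: finite_subset)
  moreover have "sqfree_mono F \<in> smonos n \<and> sqfree (sqfree_mono F) \<and> F \<subseteq> {..<n} \<and>
      {i. sqfree_mono F i \<noteq> 0} \<subseteq> F \<and> cone (sqfree_mono F) F \<subseteq> B" if "F \<in> Fs" for F
  proof -
    have F: "F \<subseteq> {..<n}" "sqfree_mono F \<in> B"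
      using that unfolding Fs_def by auto
    have support: "{i. sqfree_mono F i \<noteq> 0} = F"
      unfolding sqfree_mono_def by auto
    have "cone (sqfree_mono F) F \<subseteq> B"
      using closed F unfolding cone_sqfree_mono smonos_iff_support by auto
    then show ?thesis
      using F support unfolding smonos_iff_support sqfree_def sqfree_mono_def by auto
  qed
  moreover have "cone (sqfree_mono F) F \<inter> cone (sqfree_mono G) G = {}"
    if "(sqfree_mono F, F) \<noteq> (sqfree_mono G, G)" for F G
    using that unfolding cone_sqfree_mono by auto
  moreover have "B \<subseteq> (\<Union>F\<in>Fs. cone (sqfree_mono F) F)"
  proof
    fix m
    assume "m \<in> B"
    moreover from this have "m \<in> smonos n"
      using B by blast
    ultimately have "{i. m i \<noteq> 0} \<in> Fs"
      using closed unfolding Fs_def smonos_iff_support by blast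
    moreover have "m \<in> cone (sqfree_mono {i. m i \<noteq> 0}) {i. m i \<noteq> 0}"
      unfolding cone_sqfree_mono by simp
    ultimately show "m \<in> (\<Union>F\<in>Fs. cone (sqfree_mono F) F)"
      by blast
  qed
  ultimately have "stanley_decomp n B D"
    unfolding stanley_decomp_def D_def by auto
  moreover have "mdeg n (sqfree_mono F) \<le> n" for F
    using sum_mono[of "{..<n}" "sqfree_mono F" "\<lambda>_. 1"]
    unfolding mdeg_def sqfree_mono_def by auto
  ultimately show ?thesis
    unfolding stanley_decomp_le_def D_def by blast
qed

theorem lemma5p2:
  fixes n s :: nat and I :: "nat \<Rightarrow> mono set"
  assumes "\<forall>i<s. sqfree_monomial_ideal n (I i)"
  shows "sreg n (smonos n - (\<Union>i<s. I i)) \<le> (\<Sum>i<s. sreg n (smonos n - I i)) \<and>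
         sreg n (smonos n \<inter> (\<Inter>i<s. I i)) \<le> (\<Sum>i<s. sreg n (I i))"
proof
  have support_closed: "m \<in> I i \<longleftrightarrow> sqfree_mono {i. m i \<noteq> 0} \<in> I i"
    if "i < s" "m \<in> smonos n" for i m
    using sqfree_monomial_ideal_mem_iff_support assms that by blast
  have "\<forall>i<s. \<exists>d. stanley_decomp_le n (smonos n - I i) d"
    using support_closed sqfree_mono_support_in_smonos
    by (blast intro: stanley_decomp_le_support_closed)
  moreover have "smonos n \<inter> (\<Inter>i<s. smonos n - I i) = smonos n - (\<Union>i<s. I i)"
    by blast
  ultimately show "sreg n (smonos n - (\<Union>i<s. I i)) \<le> (\<Sum>i<s. sreg n (smonos n - I i))"
    using sreg_INT_le_sum[of s n "\<lambda>i. smonos n - I i"] by simp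
  have "\<forall>i<s. I i \<subseteq> smonos n"
    using assms unfolding sqfree_monomial_ideal_def by blast
  then have "\<forall>i<s. \<exists>d. stanley_decomp_le n (I i) d"
    using support_closed by (blast intro: stanley_decomp_le_support_closed)
  then show "sreg n (smonos n \<inter> (\<Inter>i<s. I i)) \<le> (\<Sum>i<s. sreg n (I i))"
    by (rule sreg_INT_le_sum)
qed

end
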